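(* Let $I$ be a countable set with $|I|\ge2$, let $\mathfrak{M}_i=(S_i,\mathcal{L}_i)$, $i\in I$, be partial linear spaces all of whose lines have at least $4$ points, let $\mathfrak{M}=\bigotimes_{i\in I}\mathfrak{M}_i$ with point set $S$, and let $\mathcal{H}$ be a non-degenerate hyperplane of $\mathfrak{M}$. Let $L_1,L_2$ be distinct lines of $\mathfrak{M}$, neither contained in $\mathcal{H}$, passing through a common point of $\mathcal{H}$, and suppose there are no $b\in S$, $i\in I$ with $L_1,L_2\subseteq b[i/S_i]$. Then, in the complement $\mathfrak{M}\setminus\mathcal{H}$, $(L_1\setminus\mathcal{H})\equiv(L_2\setminus\mathcal{H})$.
   Context: A partial linear space is a pair $(S,\mathcal{L})$ of points and lines such that every line has at least two points, every point lies on a line, two distinct lines share at most one point. A subspace is a set such that any line meeting it in at least two points lies in it; a hyperplane is a proper subspace meeting every line. Segre product: points $S=\prod_i S_i$; $a[i/x]$ is $a$ with $i$-th coordinate replaced by $x$, $a[i/A]=\{a[i/x]:x\in A\}$; lines are $a[i/l]$, $l\in\mathcal{L}_i$. $\mathcal{H}^{[a]}_i=\{x\in S_i:a[i/x]\in\mathcal{H}\}$; $\mathcal{H}$ is non-degenerate if every $\mathcal{H}^{[a]}_i$ is a hyperplane of $\mathfrak{M}_i$. The complement $\mathfrak{M}\setminus\mathcal{H}$ has points $S\setminus\mathcal{H}$ and lines $L\setminus\mathcal{H}$ for lines $L\not\subseteq\mathcal{H}$; in it, points are adjacent if they lie on a common line of the complement, and lines are adjacent if they share a point of the complement. A quadrangle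 without diagonals in the complement is a quadruple $p,q,r,s$ of pairwise distinct points with $p\sim q$, $q\sim r$, $r\sim s$, $s\sim p$, $p\not\sim r$, $q\not\sim s$. For lines $K_1,K_2$ of the complement, $K_1\parallel^\star K_2$ iff there is a quadrangle without diagonals $p,q,r,s$ with $K_1$ the line through $p,q$ and $K_2$ the line through $r,s$. For lines $L_1,L_2$ of the complement, $L_1\equiv L_2$ iff there are lines $K_1,K_2,M_1,M_2$ of the complement with $K_1\parallel^\star K_2$, each of $M_1,M_2,L_1$ adjacent to both $K_1$ and $K_2$, $L_2$ adjacent to both $M_1$ and $M_2$, and $L_1,L_2$ not adjacent. *)

theory Defs
  imports "HOL-Library.FuncSet" "HOL-Library.Countable_Set"
begin

definition partial_linear_space :: "'a set \<Rightarrow> 'a set set \<Rightarrow> bool" where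
  "partial_linear_space P Ls \<longleftrightarrow>
     (\<forall>l\<in>Ls. l \<subseteq> P \<and> (\<exists>x y. x \<noteq> y \<and> x \<in> l \<and> y \<in> l)) \<and>
     (\<forall>p\<in>P. \<exists>l\<in>Ls. p \<in> l) \<and>
     (\<forall>l1\<in>Ls. \<forall>l2\<in>Ls. \<forall>x y. l1 \<noteq> l2 \<and> x \<in> l1 \<inter> l2 \<and> y \<in> l1 \<inter> l2 \<longrightarrow> x = y)"

definition lines_at_least_4 :: "'a set set \<Rightarrow> bool" where
  "lines_at_least_4 Ls \<longleftrightarrow> (\<forall>l\<in>Ls. infinite l \<or> card l \<ge> 4)"

definition subspace :: "'a set \<Rightarrow> 'a set set \<Rightarrow> 'a set \<Rightarrow> bool" where
  "subspace P Ls X \<longleftrightarrow> X \<subseteq> P \<and>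
     (\<forall>l\<in>Ls. (\<exists>x y. x \<noteq> y \<and> x \<in> l \<inter> X \<and> y \<in> l \<inter> X) \<longrightarrow> l \<subseteq> X)"

definition hyperplane :: "'a set \<Rightarrow> 'a set set \<Rightarrow> 'a set \<Rightarrow> bool" where
  "hyperplane P Ls X \<longleftrightarrow> subspace P Ls X \<and> X \<noteq> P \<and> (\<forall>l\<in>Ls. l \<inter> X \<noteq> {})"

text \<open>Segre product of the family (S i, L i), i \<in> I. Points are the extensional
  functions in PiE I S; a[i/x] is a(i := x).\<close>

definition seg_points :: "'i set \<Rightarrow> ('i \<Rightarrow> 'a set) \<Rightarrow> ('i \<Rightarrow> 'a) set" where
  "seg_points I S = PiE I S"

definition subst_set :: "('i \<Rightarrow> 'a) \<Rightarrow> 'i \<Rightarrow> 'a set \<Rightarrow> ('i \<Rightarrow> 'a) set" where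
  "subst_set a i A = (\<lambda>x. a(i := x)) ` A"

definition seg_lines :: "'i set \<Rightarrow> ('i \<Rightarrow> 'a set) \<Rightarrow> ('i \<Rightarrow> 'a set set) \<Rightarrow> ('i \<Rightarrow> 'a) set set" where
  "seg_lines I S L = {subst_set a i l | a i l. a \<in> seg_points I S \<and> i \<in> I \<and> l \<in> L i}"

definition section_at :: "('i \<Rightarrow> 'a) set \<Rightarrow> ('i \<Rightarrow> 'a set) \<Rightarrow> ('i \<Rightarrow> 'a) \<Rightarrow> 'i \<Rightarrow> 'a set" where
  "section_at H S a i = {x \<in> S i. a(i := x) \<in> H}"

definition non_degenerate :: "'i set \<Rightarrow> ('i \<Rightarrow> 'a set) \<Rightarrow> ('i \<Rightarrow> 'a set set) \<Rightarrow> ('i \<Rightarrow> 'a) set \<Rightarrow> bool" where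
  "non_degenerate I S L H \<longleftrightarrow>
     (\<forall>a\<in>seg_points I S. \<forall>i\<in>I. hyperplane (S i) (L i) (section_at H S a i))"

definition compl_lines :: "'a set set \<Rightarrow> 'a set \<Rightarrow> 'a set set" where
  "compl_lines Ls H = {l - H | l. l \<in> Ls \<and> \<not> l \<subseteq> H}"

definition pt_adj :: "'a set set \<Rightarrow> 'a \<Rightarrow> 'a \<Rightarrow> bool" where
  "pt_adj CL p q \<longleftrightarrow> (\<exists>K\<in>CL. p \<in> K \<and> q \<in> K)"

definition ln_adj :: "'a set \<Rightarrow> 'a set \<Rightarrow> bool" where
  "ln_adj K1 K2 \<longleftrightarrow> K1 \<inter> K2 \<noteq> {}"

definition par_star :: "'a set set \<Rightarrow> 'a set \<Rightarrow> 'a set \<Rightarrow> bool" where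
  "par_star CL K1 K2 \<longleftrightarrow> K1 \<in> CL \<and> K2 \<in> CL \<and>
     (\<exists>p q r s. distinct [p, q, r, s] \<and>
        pt_adj CL p q \<and> pt_adj CL q r \<and> pt_adj CL r s \<and> pt_adj CL s p \<and>
        \<not> pt_adj CL p r \<and> \<not> pt_adj CL q s \<and>
        p \<in> K1 \<and> q \<in> K1 \<and> r \<in> K2 \<and> s \<in> K2)"

definition line_equiv :: "'a set set \<Rightarrow> 'a set \<Rightarrow> 'a set \<Rightarrow> bool" where
  "line_equiv CL L1 L2 \<longleftrightarrow> L1 \<in> CL \<and> L2 \<in> CL \<and>
     (\<exists>K1\<in>CL. \<exists>K2\<in>CL. \<exists>M1\<in>CL. \<exists>M2\<in>CL.
        par_star CL K1 K2 \<and>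
        ln_adj M1 K1 \<and> ln_adj M1 K2 \<and> ln_adj M2 K1 \<and> ln_adj M2 K2 \<and>
        ln_adj L1 K1 \<and> ln_adj L1 K2 \<and>
        ln_adj L2 M1 \<and> ln_adj L2 M2 \<and> \<not> ln_adj L1 L2)"

end

theory Submission
  imports Defs
begin

text \<open>Let \<open>p\<close> be a common point of \<open>L\<^sub>1\<close> and \<open>L\<^sub>2\<close> in \<open>H\<close>. As the two lines do not lie in a
  common \<open>b[i/S\<^sub>i]\<close>, they run in different directions \<open>i \<noteq> j\<close>: \<open>L\<^sub>1 = p[i/l\<^sub>1]\<close> and
  \<open>L\<^sub>2 = p[j/l\<^sub>2]\<close> are the axes of a grid of points \<open>p[j/y][i/x]\<close>, whose rows and columns are
  lines of the product, while two grid points differing in both coordinates are never collinear.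
  Pick \<open>y\<^sub>1 \<in> l\<^sub>2\<close> other than \<open>p\<^sub>j\<close>. The row through \<open>y\<^sub>1\<close> is not contained in \<open>H\<close>, so it
  meets \<open>H\<close> in at most one point, and as lines have at least four points there are
  \<open>x\<^sub>1 \<noteq> x\<^sub>2\<close> in \<open>l\<^sub>1\<close> avoiding \<open>p\<^sub>i\<close> and that point. The four grid points over
  \<open>{x\<^sub>1, x\<^sub>2} \<times> {p\<^sub>j, y\<^sub>1}\<close> form a quadrangle without diagonals on the columns through \<open>x\<^sub>1\<close>
  and \<open>x\<^sub>2\<close>, closed by \<open>L\<^sub>1\<close> and the row through \<open>y\<^sub>1\<close>; this row also meets \<open>L\<^sub>2\<close> outside
  \<open>H\<close>, so it serves as both \<open>M\<^sub>1\<close> and \<open>M\<^sub>2\<close>.\<close>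

lemma subspace_line_meets_once:
  assumes "subspace P Ls X" "l \<in> Ls" "\<not> l \<subseteq> X" "p \<in> l \<inter> X" "q \<in> l \<inter> X"
  shows "q = p"
  using assms unfolding subspace_def by blast

lemma subspace_line_notin:
  assumes "subspace P Ls X" "l \<in> Ls" "\<not> l \<subseteq> X" "p \<in> l \<inter> X" "q \<in> l" "q \<noteq> p"
  shows "q \<notin> X"
  using subspace_line_meets_once[OF assms(1-4)] assms(5,6) by blast

lemma subspace_line_inter_subsingleton:
  assumes "subspace P Ls X" "l \<in> Ls" "\<not> l \<subseteq> X"
  obtains q where "l \<inter> X \<subseteq> {q}"
  using subspace_line_meets_once[OF assms] by blast

lemma two_points_avoiding:
  assumes "infinite l \<or> card l \<ge> 4"
  obtains x1 x2 where "x1 \<in> l" "x2 \<in> l" "x1 \<noteq> x2" "x1 \<notin> {a, b}" "x2 \<notin> {a, b}"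
proof -
  have not_in_three: "\<not> l \<subseteq> {a, b, c}" for c
  proof
    assume sub: "l \<subseteq> {a, b, c}"
    then have "finite l" using finite_subset by blast
    moreover have "card l \<le> card {a, b, c}" using sub by (simp add: card_mono)
    moreover have "card {a, b, c} \<le> 3" by (simp add: card_insert_if)
    ultimately show False using assms by simp
  qed
  obtain x1 where "x1 \<in> l" "x1 \<notin> {a, b}" using not_in_three[of a] by blast
  moreover obtain x2 where "x2 \<in> l" "x2 \<notin> {a, b, x1}" using not_in_three[of x1] by blast
  ultimately show thesis using that by blast
qed

lemma compl_lines_memI: "l \<in> Ls \<Longrightarrow> z \<in> l \<Longrightarrow> z \<notin> H \<Longrightarrow> l - H \<in> compl_lines Ls H"
  unfolding compl_lines_def by blast

lemma pt_adj_compl_linesD: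
  assumes "pt_adj (compl_lines Ls H) f g"
  obtains l where "l \<in> Ls" "f \<in> l" "g \<in> l"
  using assms unfolding pt_adj_def compl_lines_def by blast

lemma fun_upd_in_subst_set: "x \<in> A \<Longrightarrow> b(k := x) \<in> subst_set b k A"
  by (simp add: subst_set_def)

lemma subst_set_agree:
  assumes "f \<in> subst_set b k A" "g \<in> subst_set b k A" "t \<noteq> k"
  shows "f t = g t"
  using assms by (auto simp: subst_set_def)

lemma subst_set_inter_subset:
  assumes "i \<noteq> j"
  shows "subst_set p i A \<inter> subst_set p j B \<subseteq> {p}"
proof
  fix f assume "f \<in> subst_set p i A \<inter> subst_set p j B"
  then obtain x y where f: "f = p(i := x)" "f = p(j := y)" unfolding subst_set_def by blast
  then have "y = p j" using assms by (metis fun_upd_same fun_upd_other)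
  then show "f \<in> {p}" using f(2) by simp
qed

lemma fun_upd_in_seg_points:
  "a \<in> seg_points I S \<Longrightarrow> i \<in> I \<Longrightarrow> x \<in> S i \<Longrightarrow> a(i := x) \<in> seg_points I S"
  by (auto simp: seg_points_def PiE_iff extensional_def)

lemma subst_set_in_seg_lines:
  "a \<in> seg_points I S \<Longrightarrow> i \<in> I \<Longrightarrow> l \<in> L i \<Longrightarrow> subst_set a i l \<in> seg_lines I S L"
  unfolding seg_lines_def by blast

lemma seg_line_coords_eq:
  assumes "l \<in> seg_lines I S L" "f \<in> l" "g \<in> l" "f i \<noteq> g i" "f j \<noteq> g j"
  shows "i = j"
proof -
  obtain b k m where "l = subst_set b k m" using assms(1) unfolding seg_lines_def by blast
  then have "i = k" "j = k" using subst_set_agree assms(2-5) by metis+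
  then show ?thesis by simp
qed

lemma seg_line_through_point:
  assumes "\<forall>i\<in>I. partial_linear_space (S i) (L i)" "K \<in> seg_lines I S L" "p \<in> K"
  obtains i l where "i \<in> I" "l \<in> L i" "l \<subseteq> S i" "p i \<in> l" "K = subst_set p i l"
proof -
  obtain a i l where K: "K = subst_set a i l" "i \<in> I" "l \<in> L i"
    using assms(2) unfolding seg_lines_def by blast
  have "l \<subseteq> S i" using assms(1) K(2,3) unfolding partial_linear_space_def by blast
  moreover obtain x where x: "x \<in> l" "p = a(i := x)" using assms(3) K(1) unfolding subst_set_def by blast
  then have "p i \<in> l" by simp
  moreover have "K = subst_set p i l" using K(1) x(2) by (simp add: subst_set_def)
  ultimately show thesis by (rule that[OF K(2,3)])
qed

text \<open>Here \<open>M\<close> plays the roles of both \<open>M\<^sub>1\<close> and \<open>M\<^sub>2\<close>.\<close>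

lemma line_equivI:
  assumes lines: "K \<in> CL" "K' \<in> CL" "M \<in> CL" "L \<in> CL" "L' \<in> CL"
    and "distinct [a, b, c, d]"
    and "a \<in> L \<inter> K" "b \<in> K \<inter> M" "c \<in> M \<inter> K'" "d \<in> K' \<inter> L" "e \<in> L' \<inter> M"
    and "\<not> pt_adj CL a c" "\<not> pt_adj CL b d" "L \<inter> L' = {}"
  shows "line_equiv CL L L'"
proof -
  have "pt_adj CL a b" "pt_adj CL b c" "pt_adj CL c d" "pt_adj CL d a"
    unfolding pt_adj_def using assms(1-4,7-10) by blast+
  with assms(1,2,6-10,12,13) have "par_star CL K K'"
    unfolding par_star_def by (intro conjI exI[of _ a] exI[of _ b] exI[of _ c] exI[of _ d]; simp)
  moreover have "ln_adj M K" "ln_adj M K'" "ln_adj L K" "ln_adj L K'" "ln_adj L' M"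
    "\<not> ln_adj L L'"
    unfolding ln_adj_def using assms(7-11,14) by blast+
  ultimately show ?thesis
    unfolding line_equiv_def using lines by blast
qed

locale segre_cross =
  fixes I :: "'i set" and S :: "'i \<Rightarrow> 'a set" and L :: "'i \<Rightarrow> 'a set set"
    and H :: "('i \<Rightarrow> 'a) set" and p :: "'i \<Rightarrow> 'a" and i j :: 'i and l1 l2 :: "'a set"
  assumes partial_linear: "\<forall>k\<in>I. partial_linear_space (S k) (L k)"
    and subspace_H: "subspace (seg_points I S) (seg_lines I S L) H"
    and p_in_H: "p \<in> H"
    and directions: "i \<in> I" "j \<in> I" "i \<noteq> j"
    and l1: "l1 \<in> L i" "l1 \<subseteq> S i" "p i \<in> l1"
    and l2: "l2 \<in> L j" "l2 \<subseteq> S j" "p j \<in> l2"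
    and axes_not_in_H: "\<not> subst_set p i l1 \<subseteq> H" "\<not> subst_set p j l2 \<subseteq> H"
begin

abbreviation compl_seg_lines :: "('i \<Rightarrow> 'a) set set" where
  "compl_seg_lines \<equiv> compl_lines (seg_lines I S L) H"

definition grid_pt :: "'a \<Rightarrow> 'a \<Rightarrow> 'i \<Rightarrow> 'a" where
  "grid_pt x y = p(j := y, i := x)"

definition row :: "'a \<Rightarrow> ('i \<Rightarrow> 'a) set" where
  "row y = subst_set (p(j := y)) i l1"

definition col :: "'a \<Rightarrow> ('i \<Rightarrow> 'a) set" where
  "col x = subst_set (p(i := x)) j l2"

lemma grid_pt_coords [simp]: "grid_pt x y i = x" "grid_pt x y j = y"
  unfolding grid_pt_def using directions(3) by simp_all

lemma grid_pt_in_row: "x \<in> l1 \<Longrightarrow> grid_pt x y \<in> row y"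
  unfolding grid_pt_def row_def by (rule fun_upd_in_subst_set)

lemma grid_pt_in_col: "y \<in> l2 \<Longrightarrow> grid_pt x y \<in> col x"
  unfolding grid_pt_def col_def using directions(3) fun_upd_in_subst_set by (metis fun_upd_twist)

lemma row_axis: "row (p j) = subst_set p i l1"
  and col_axis: "col (p i) = subst_set p j l2"
  unfolding row_def col_def by simp_all

lemma p_in_seg_points: "p \<in> seg_points I S"
  using subspace_H p_in_H unfolding subspace_def by blast

lemma row_in_seg_lines: "y \<in> S j \<Longrightarrow> row y \<in> seg_lines I S L"
  unfolding row_def
  using fun_upd_in_seg_points[OF p_in_seg_points directions(2)] directions(1) l1(1)
  by (rule subst_set_in_seg_lines)

lemma col_in_seg_lines: "x \<in> S i \<Longrightarrow> col x \<in> seg_lines I S L"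
  unfolding col_def
  using fun_upd_in_seg_points[OF p_in_seg_points directions(1)] directions(2) l2(1)
  by (rule subst_set_in_seg_lines)

lemma row_axis_off_H:
  assumes "x \<in> l1" "x \<noteq> p i"
  shows "grid_pt x (p j) \<notin> H"
proof (rule subspace_line_notin[OF subspace_H row_in_seg_lines])
  show "grid_pt x (p j) \<in> row (p j)" by (rule grid_pt_in_row[OF assms(1)])
  show "p \<in> row (p j) \<inter> H"
    using fun_upd_in_subst_set[OF l1(3), of p i] p_in_H by (simp add: row_axis)
  show "grid_pt x (p j) \<noteq> p" using assms(2) grid_pt_coords(1) by metis
qed (use l2 axes_not_in_H row_axis in auto)

lemma col_axis_off_H:
  assumes "y \<in> l2" "y \<noteq> p j"
  shows "grid_pt (p i) y \<notin> H"
proof (rule subspace_line_notin[OF subspace_H col_in_seg_lines])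
  show "grid_pt (p i) y \<in> col (p i)" by (rule grid_pt_in_col[OF assms(1)])
  show "p \<in> col (p i) \<inter> H"
    using fun_upd_in_subst_set[OF l2(3), of p j] p_in_H by (simp add: col_axis)
  show "grid_pt (p i) y \<noteq> p" using assms(2) grid_pt_coords(2) by metis
qed (use l1 axes_not_in_H col_axis in auto)

lemma grid_pt_not_adj:
  assumes "x \<noteq> x'" "y \<noteq> y'"
  shows "\<not> pt_adj compl_seg_lines (grid_pt x y) (grid_pt x' y')"
proof
  assume "pt_adj compl_seg_lines (grid_pt x y) (grid_pt x' y')"
  then obtain l where l: "l \<in> seg_lines I S L" "grid_pt x y \<in> l" "grid_pt x' y' \<in> l"
    by (rule pt_adj_compl_linesD)
  have "i = j" by (rule seg_line_coords_eq[OF l]) (simp_all add: assms)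
  with directions(3) show False by simp
qed

lemma axes_compl_disjoint: "(subst_set p i l1 - H) \<inter> (subst_set p j l2 - H) = {}"
  using subst_set_inter_subset[OF directions(3)] p_in_H by blast

lemma row_off_H:
  assumes "y1 \<in> l2" "y1 \<noteq> p j"
  obtains z where "\<And>x. x \<in> l1 \<Longrightarrow> x \<noteq> z \<Longrightarrow> grid_pt x y1 \<notin> H"
proof -
  have "y1 \<in> S j" using assms(1) l2(2) by blast
  moreover have "\<not> row y1 \<subseteq> H"
    using col_axis_off_H[OF assms] grid_pt_in_row[OF l1(3)] by blast
  ultimately obtain q where q: "row y1 \<inter> H \<subseteq> {q}"
    using subspace_line_inter_subsingleton[OF subspace_H row_in_seg_lines] by blast
  have "grid_pt x y1 \<notin> H" if "x \<in> l1" "x \<noteq> q i" for x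
  proof
    assume "grid_pt x y1 \<in> H"
    then have "grid_pt x y1 = q" using q grid_pt_in_row[OF that(1)] by blast
    then show False using grid_pt_coords(1)[of x y1] that(2) by auto
  qed
  then show thesis by (rule that)
qed

theorem axes_line_equiv:
  assumes "lines_at_least_4 (L i)"
  shows "line_equiv compl_seg_lines (subst_set p i l1 - H) (subst_set p j l2 - H)"
proof -
  obtain y1 where y1: "y1 \<in> l2" "y1 \<noteq> p j"
    using partial_linear directions(2) l2(1) unfolding partial_linear_space_def by metis
  obtain z where z: "\<And>x. x \<in> l1 \<Longrightarrow> x \<noteq> z \<Longrightarrow> grid_pt x y1 \<notin> H"
    using row_off_H[OF y1] by blast
  have "infinite l1 \<or> card l1 \<ge> 4" using assms l1(1) unfolding lines_at_least_4_def by blast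
  then obtain x1 x2 where x: "x1 \<in> l1" "x2 \<in> l1" "x1 \<noteq> x2" "x1 \<notin> {p i, z}" "x2 \<notin> {p i, z}"
    by (rule two_points_avoiding)
  have off_H: "grid_pt x1 (p j) \<notin> H" "grid_pt x2 (p j) \<notin> H" "grid_pt x1 y1 \<notin> H"
      "grid_pt x2 y1 \<notin> H" "grid_pt (p i) y1 \<notin> H"
    using row_axis_off_H col_axis_off_H z x y1 by auto
  have on_lines: "grid_pt x1 (p j) \<in> row (p j)" "grid_pt x2 (p j) \<in> row (p j)"
      "grid_pt (p i) y1 \<in> col (p i)" "grid_pt x1 (p j) \<in> col x1" "grid_pt x1 y1 \<in> col x1"
      "grid_pt x2 (p j) \<in> col x2" "grid_pt x2 y1 \<in> col x2" "grid_pt x1 y1 \<in> row y1"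
      "grid_pt x2 y1 \<in> row y1" "grid_pt (p i) y1 \<in> row y1"
    using grid_pt_in_row grid_pt_in_col x(1,2) y1(1) l1(3) l2(3) by auto
  have lines: "col x1 \<in> seg_lines I S L" "col x2 \<in> seg_lines I S L" "row y1 \<in> seg_lines I S L"
      "row (p j) \<in> seg_lines I S L" "col (p i) \<in> seg_lines I S L"
    using col_in_seg_lines row_in_seg_lines x(1,2) y1(1) l1 l2 by auto
  have quadrangle_distinct:
      "distinct [grid_pt x1 (p j), grid_pt x1 y1, grid_pt x2 y1, grid_pt x2 (p j)]"
    using x(3) y1(2) by simp (metis grid_pt_coords)
  show ?thesis
    unfolding row_axis[symmetric] col_axis[symmetric]
  proof (rule line_equivI[where K = "col x1 - H" and K' = "col x2 - H" and M = "row y1 - H"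
        and a = "grid_pt x1 (p j)" and b = "grid_pt x1 y1" and c = "grid_pt x2 y1"
        and d = "grid_pt x2 (p j)" and e = "grid_pt (p i) y1"])
    show "col x1 - H \<in> compl_seg_lines" "col x2 - H \<in> compl_seg_lines"
        "row y1 - H \<in> compl_seg_lines"
        "row (p j) - H \<in> compl_seg_lines" "col (p i) - H \<in> compl_seg_lines"
      using compl_lines_memI[of _ "seg_lines I S L"] lines on_lines off_H by meson+
    show "\<not> pt_adj compl_seg_lines (grid_pt x1 (p j)) (grid_pt x2 y1)"
        "\<not> pt_adj compl_seg_lines (grid_pt x1 y1) (grid_pt x2 (p j))"
      using grid_pt_not_adj x(3) y1(2) by auto
  qed (use quadrangle_distinct on_lines off_H axes_compl_disjoint row_axis col_axis in auto)
qed

end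

theorem lemma3p14:
  fixes I :: "'i set" and S :: "'i \<Rightarrow> 'a set" and L :: "'i \<Rightarrow> 'a set set"
    and H :: "('i \<Rightarrow> 'a) set" and L1 L2 :: "('i \<Rightarrow> 'a) set"
  assumes "countable I"
    and "\<exists>i\<in>I. \<exists>j\<in>I. i \<noteq> j"
    and "\<forall>i\<in>I. partial_linear_space (S i) (L i) \<and> lines_at_least_4 (L i)"
    and "hyperplane (seg_points I S) (seg_lines I S L) H"
    and "non_degenerate I S L H"
    and "L1 \<in> seg_lines I S L" and "L2 \<in> seg_lines I S L" and "L1 \<noteq> L2"
    and "\<not> L1 \<subseteq> H" and "\<not> L2 \<subseteq> H"
    and "L1 \<inter> L2 \<inter> H \<noteq> {}"
    and "\<not> (\<exists>b\<in>seg_points I S. \<exists>i\<in>I. L1 \<subseteq> subst_set b i (S i) \<and> L2 \<subseteq> subst_set b i (S i))"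
  shows "line_equiv (compl_lines (seg_lines I S L) H) (L1 - H) (L2 - H)"
proof -
  have pls: "\<forall>i\<in>I. partial_linear_space (S i) (L i)" using assms(3) by blast
  have sub: "subspace (seg_points I S) (seg_lines I S L) H"
    using assms(4) unfolding hyperplane_def by blast
  obtain p where p: "p \<in> L1" "p \<in> L2" "p \<in> H" using assms(11) by blast
  obtain i l1 where i: "i \<in> I" "l1 \<in> L i" "l1 \<subseteq> S i" "p i \<in> l1" and L1: "L1 = subst_set p i l1"
    using seg_line_through_point[OF pls assms(6) p(1)] by blast
  obtain j l2 where j: "j \<in> I" "l2 \<in> L j" "l2 \<subseteq> S j" "p j \<in> l2" and L2: "L2 = subst_set p j l2"
    using seg_line_through_point[OF pls assms(7) p(2)] by blast
  have "i \<noteq> j"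
  proof
    assume "i = j"
    then have "L1 \<subseteq> subst_set p i (S i) \<and> L2 \<subseteq> subst_set p i (S i)"
      using L1 L2 i(3) j(3) by (auto simp: subst_set_def)
    moreover have "p \<in> seg_points I S" using sub p(3) unfolding subspace_def by blast
    ultimately show False using assms(12) i(1) by blast
  qed
  then interpret segre_cross I S L H p i j l1 l2
    using pls sub p(3) i j assms(9,10) L1 L2 by unfold_locales auto
  show ?thesis
    using axes_line_equiv assms(3) i(1) L1 L2 by blast
qed

end
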